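(* Normalize $\operatorname{var}(X)=1$ and $\operatorname{var}(W_1)=I_{d_1}$, and suppose $\operatorname{var}(Y,X,W_1)$ is positive definite. Then $b\in\mathcal B(r_X,r_Y,c)$ if and only if there exists $(p_1,g_1)\in\mathbb R^{d_1}\times\mathbb R^{d_1}$ with $(p_1'r_X)(g_1'r_Y)(1-\|c\|^2)=k_1-bk_0$; $(I+cr_Y')g_1=\sigma_{W_1,Y}-b\sigma_{W_1,X}$; $(I+cr_X')p_1=\sigma_{W_1,X}$; $(g_1'r_Y)^2(1-\|c\|^2)<k_0(\beta_{\text{med}}-b)^2+\operatorname{var}(Y^{\perp X,W_1})$; $(p_1'r_X)^2(1-\|c\|^2)<k_0$; $\|c\|^2<1$.
   Context: For random vectors $A,B$ with $\operatorname{var}(B)$ invertible, $A^{\perp B}=A-\operatorname{cov}(A,B)\operatorname{var}(B)^{-1}B$. $\sigma_{A,B}=\operatorname{cov}(A,B)$ (column vectors when $A=W_1$). $\beta_{\text{med}}$ is the coefficient on $X$ in the linear projection of $Y$ on $(1,X,W_1)$. $k_0=\operatorname{var}(X^{\perp W_1})$, $k_1=\operatorname{cov}(Y^{\perp W_1},X^{\perp W_1})$. For $r_X,r_Y,c\in\mathbb R^{d_1}$, $\mathcal B(r_X,r_Y,c)$ is the set of $b\in\mathbb R$ such that for some $(p_1,g_1)\in\mathbb R^{d_1}\times\mathbb R^{d_1}$ (with $\Sigma_{\text{obs}}=\operatorname{var}(W_1)$): $\operatorname{cov}(Y,X)=b\operatorname{var}(X)+g_1'(\Sigma_{\text{obs}}+cr_X'+r_Yc'+r_Yr_X')p_1$;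 $\operatorname{cov}(Y,W_1)=b\operatorname{cov}(X,W_1)+g_1'(\Sigma_{\text{obs}}+r_Yc')$; $\operatorname{cov}(X,W_1)=p_1'(\Sigma_{\text{obs}}+r_Xc')$; $\operatorname{var}(Y)>b^2\operatorname{var}(X)+g_1'(\Sigma_{\text{obs}}+r_Yr_Y'+2r_Yc')g_1+2bg_1'(\Sigma_{\text{obs}}+cr_X'+r_Yc'+r_Yr_X')p_1$; $\operatorname{var}(X)>p_1'(\Sigma_{\text{obs}}+2r_Xc'+r_Xr_X')p_1$; $1>c'\Sigma_{\text{obs}}^{-1}c$. *)

theory Defs
  imports "HOL-Analysis.Analysis"
begin

text \<open>The joint second-moment structure of (Y, X, W1) is represented by its covariance
entries: vY = var Y, vX = var X, sYX = cov(Y,X), sWX = cov(W1,X), sWY = cov(W1,Y),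
Sig = var W1 (a d1 x d1 matrix, with d1 = CARD('d)).\<close>

definition outer :: "real^'d \<Rightarrow> real^'d \<Rightarrow> real^'d^'d" where
  "outer u v = (\<chi> i j. u $ i * v $ j)"

definition joint_pd :: "real \<Rightarrow> real \<Rightarrow> real \<Rightarrow> real^'d \<Rightarrow> real^'d \<Rightarrow> real^'d^'d \<Rightarrow> bool" where
  "joint_pd vY vX sYX sWX sWY Sig \<longleftrightarrow>
     (\<forall>a e (v::real^'d). (a \<noteq> 0 \<or> e \<noteq> 0 \<or> v \<noteq> 0) \<longrightarrow>
        a^2 * vY + e^2 * vX + v \<bullet> (Sig *v v) + 2 * a * e * sYX
        + 2 * a * (v \<bullet> sWY) + 2 * e * (v \<bullet> sWX) > 0)"

text \<open>Coefficients (b, gamma) of the linear projection of Y on (1, X, W1),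
characterised by the normal equations cov(Y - bX - gamma'W1, X) = 0 and
cov(Y - bX - gamma'W1, W1) = 0.\<close>
definition proj_coef :: "real \<Rightarrow> real \<Rightarrow> real^'d \<Rightarrow> real^'d \<Rightarrow> real^'d^'d \<Rightarrow> real \<times> (real^'d)" where
  "proj_coef vX sYX sWX sWY Sig =
     (THE (b, g). sYX = b * vX + g \<bullet> sWX \<and> sWY = b *\<^sub>R sWX + Sig *v g)"

definition beta_med :: "real \<Rightarrow> real \<Rightarrow> real^'d \<Rightarrow> real^'d \<Rightarrow> real^'d^'d \<Rightarrow> real" where
  "beta_med vX sYX sWX sWY Sig = fst (proj_coef vX sYX sWX sWY Sig)"

text \<open>var(Y^{perp X,W1}) = var(Y - b X - gamma'W1) at the projection coefficients.\<close>
definition var_Y_perp_XW :: "real \<Rightarrow> real \<Rightarrow> real \<Rightarrow> real^'d \<Rightarrow> real^'d \<Rightarrow> real^'d^'d \<Rightarrow> real" where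
  "var_Y_perp_XW vY vX sYX sWX sWY Sig =
     (let (b, g) = proj_coef vX sYX sWX sWY Sig in
        vY + b^2 * vX + g \<bullet> (Sig *v g) - 2 * b * sYX - 2 * (g \<bullet> sWY) + 2 * b * (g \<bullet> sWX))"

text \<open>k0 = var(X^{perp W1}),  k1 = cov(Y^{perp W1}, X^{perp W1}).\<close>
definition k0 :: "real \<Rightarrow> real^'d \<Rightarrow> real^'d^'d \<Rightarrow> real" where
  "k0 vX sWX Sig = vX - sWX \<bullet> (matrix_inv Sig *v sWX)"

definition k1 :: "real \<Rightarrow> real^'d \<Rightarrow> real^'d \<Rightarrow> real^'d^'d \<Rightarrow> real" where
  "k1 sYX sWX sWY Sig = sYX - sWY \<bullet> (matrix_inv Sig *v sWX)"

definition Bset :: "real \<Rightarrow> real \<Rightarrow> real \<Rightarrow> real^'d \<Rightarrow> real^'d \<Rightarrow> real^'d^'d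
     \<Rightarrow> real^'d \<Rightarrow> real^'d \<Rightarrow> real^'d \<Rightarrow> real set" where
  "Bset vY vX sYX sWX sWY Sig rX rY c =
     {b. \<exists>p1 g1.
        sYX = b * vX + g1 \<bullet> ((Sig + outer c rX + outer rY c + outer rY rX) *v p1) \<and>
        sWY = b *\<^sub>R sWX + (g1 v* (Sig + outer rY c)) \<and>
        sWX = p1 v* (Sig + outer rX c) \<and>
        vY > b^2 * vX + g1 \<bullet> ((Sig + outer rY rY + 2 *\<^sub>R outer rY c) *v g1)
             + 2 * b * (g1 \<bullet> ((Sig + outer c rX + outer rY c + outer rY rX) *v p1)) \<and>
        vX > p1 \<bullet> ((Sig + 2 *\<^sub>R outer rX c + outer rX rX) *v p1) \<and>
        1 > c \<bullet> (matrix_inv Sig *v c)}"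

end

theory Submission imports Defs begin

text \<open>With \<open>var(W\<^sub>1) = I\<close> every matrix in the definition of \<open>\<B>(r\<^sub>X, r\<^sub>Y, c)\<close> is the identity
plus rank-one terms. Writing \<open>a = p\<^sub>1'r\<^sub>X\<close>, \<open>\<gamma> = g\<^sub>1'r\<^sub>Y\<close>, \<open>s = (I + c r\<^sub>X')p\<^sub>1\<close>,
\<open>u = (I + c r\<^sub>Y')g\<^sub>1\<close> and \<open>\<delta> = 1 - \<parallel>c\<parallel>\<^sup>2\<close>, the three quadratic forms in that definition are
\<open>u's + a\<gamma>\<delta>\<close>, \<open>u'u + \<gamma>\<^sup>2\<delta>\<close> and \<open>s's + a\<^sup>2\<delta>\<close>. The linear constraints identify \<open>s\<close> with
\<open>\<sigma>\<^sub>W\<^sub>X\<close> and \<open>u\<close> with \<open>\<sigma>\<^sub>W\<^sub>Y - b\<sigma>\<^sub>W\<^sub>X\<close>, and the remaining constraints become the stated ones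
after the decomposition \<open>var(Y - bX - u'W\<^sub>1) = k\<^sub>0(\<beta>\<^sub>m\<^sub>e\<^sub>d - b)\<^sup>2 + var(Y\<^sup>\<bottom>\<^sup>X\<^sup>,\<^sup>W\<^sup>1)\<close>.\<close>

lemma matrix_inv_mat_1: "matrix_inv (mat 1 :: 'a::semiring_1^'n^'n) = mat 1"
proof -
  have "mat 1 ** matrix_inv (mat 1 :: 'a^'n^'n) = mat 1"
    unfolding matrix_inv_def by (rule someI[of _ "mat 1", THEN conjunct1]) simp
  then show ?thesis by simp
qed

lemma outer_mult_vector: "outer (u::real^'n) v *v x = (v \<bullet> x) *\<^sub>R u"
  unfolding outer_def matrix_vector_mult_def vec_eq_iff inner_vec_def
  by (auto simp: sum_distrib_right intro!: sum.cong)

lemma vector_mult_outer: "x v* outer u (v::real^'n) = (x \<bullet> u) *\<^sub>R v"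
  unfolding outer_def vector_matrix_mult_def vec_eq_iff inner_vec_def
  by (auto simp: sum_distrib_right intro!: sum.cong)

lemma identity_plus_outer_mult_vector: "(mat 1 + outer c r) *v (x::real^'n) = x + (x \<bullet> r) *\<^sub>R c"
  by (simp add: matrix_vector_mult_add_rdistrib outer_mult_vector inner_commute)

lemma vector_mult_identity_plus_outer: "(x::real^'n) v* (mat 1 + outer r c) = x + (x \<bullet> r) *\<^sub>R c"
  by (simp add: vector_matrix_mult_add_rdistrib vector_mult_outer)

lemma rank_one_cross_form:
  fixes g p c rX rY :: "real^'n"
  shows "g \<bullet> ((mat 1 + outer c rX + outer rY c + outer rY rX) *v p)
     = (g + (g \<bullet> rY) *\<^sub>R c) \<bullet> (p + (p \<bullet> rX) *\<^sub>R c) + (p \<bullet> rX) * (g \<bullet> rY) * (1 - c \<bullet> c)"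
  by (simp add: matrix_vector_mult_add_rdistrib outer_mult_vector inner_add_left
      inner_add_right inner_commute algebra_simps)

lemma rank_one_square_form:
  fixes p r c :: "real^'n"
  shows "p \<bullet> ((mat 1 + 2 *\<^sub>R outer r c + outer r r) *v p)
     = (p + (p \<bullet> r) *\<^sub>R c) \<bullet> (p + (p \<bullet> r) *\<^sub>R c) + (p \<bullet> r)\<^sup>2 * (1 - c \<bullet> c)"
  by (simp add: matrix_vector_mult_add_rdistrib outer_mult_vector scaleR_matrix_vector_assoc[symmetric]
      inner_add_left inner_add_right inner_commute algebra_simps power2_eq_square)

lemma joint_pd_imp_k0_pos:
  fixes sWX :: "real^'n"
  assumes "joint_pd vY 1 sYX sWX sWY (mat 1)"
  shows "0 < 1 - sWX \<bullet> sWX"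
  using assms[unfolded joint_pd_def, rule_format, of 0 1 "- sWX"] by (simp add: inner_commute)

lemma proj_coef_standardized:
  fixes sYX :: real and sWX sWY :: "real^'n"
  assumes "0 < 1 - sWX \<bullet> sWX"
  defines "\<beta> \<equiv> (sYX - sWY \<bullet> sWX) / (1 - sWX \<bullet> sWX)"
  shows "proj_coef 1 sYX sWX sWY (mat 1) = (\<beta>, sWY - \<beta> *\<^sub>R sWX)"
  unfolding proj_coef_def
proof (rule the_equality)
  show "case (\<beta>, sWY - \<beta> *\<^sub>R sWX) of (b, g) \<Rightarrow> sYX = b * 1 + g \<bullet> sWX \<and> sWY = b *\<^sub>R sWX + mat 1 *v g"
    using assms by (simp add: \<beta>_def inner_diff_left field_simps)
next
  fix x assume "case x of (b, g) \<Rightarrow> sYX = b * 1 + g \<bullet> sWX \<and> sWY = b *\<^sub>R sWX + mat 1 *v g"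
  then obtain b g where x: "x = (b, g)" and "sYX = b + g \<bullet> sWX" and g: "g = sWY - b *\<^sub>R sWX"
    by (cases x) auto
  then have "sYX = b + sWY \<bullet> sWX - b * (sWX \<bullet> sWX)" by (simp add: inner_diff_left)
  then have "b = \<beta>" using assms by (simp add: \<beta>_def field_simps)
  then show "x = (\<beta>, sWY - \<beta> *\<^sub>R sWX)" using x g by simp
qed

lemma residual_variance_decomposition:
  fixes sYX :: real and sWX sWY :: "real^'n"
  assumes "0 < 1 - sWX \<bullet> sWX"
  shows "k0 1 sWX (mat 1) * (beta_med 1 sYX sWX sWY (mat 1) - b)\<^sup>2 + var_Y_perp_XW vY 1 sYX sWX sWY (mat 1)
    = vY - (sWY - b *\<^sub>R sWX) \<bullet> (sWY - b *\<^sub>R sWX) - 2 * b * sYX + b\<^sup>2"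
proof -
  define \<beta> where "\<beta> = (sYX - sWY \<bullet> sWX) / (1 - sWX \<bullet> sWX)"
  have coef: "proj_coef 1 sYX sWX sWY (mat 1) = (\<beta>, sWY - \<beta> *\<^sub>R sWX)"
    using proj_coef_standardized[OF assms] by (simp add: \<beta>_def)
  have sYX: "sYX = \<beta> * (1 - sWX \<bullet> sWX) + sWY \<bullet> sWX"
    using assms by (simp add: \<beta>_def)
  show ?thesis
    unfolding k0_def beta_med_def var_Y_perp_XW_def coef matrix_inv_mat_1 matrix_vector_mul_lid
    by (simp add: inner_diff_left inner_diff_right inner_commute[of sWX sWY] algebra_simps power2_eq_square)
      (simp add: sYX algebra_simps)
qed

text \<open>Here \<open>t\<close>, \<open>q\<close>, \<open>r\<close> stand for the rank-one remainders \<open>a\<gamma>\<delta>\<close>, \<open>\<gamma>\<^sup>2\<delta>\<close>, \<open>a\<^sup>2\<delta>\<close> of the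
quadratic forms.\<close>

lemma identified_set_conditions_iff:
  fixes s u sWX sWY :: "'a::real_inner" and t q r :: real
  shows "(sYX = b + (u \<bullet> s + t) \<and> sWY = b *\<^sub>R sWX + u \<and> sWX = s \<and>
          b\<^sup>2 + (u \<bullet> u + q) + 2 * b * (u \<bullet> s + t) < vY \<and> s \<bullet> s + r < 1 \<and> C)
     \<longleftrightarrow> (t = sYX - sWY \<bullet> sWX - b * (1 - sWX \<bullet> sWX) \<and> u = sWY - b *\<^sub>R sWX \<and> s = sWX \<and>
          q < vY - (sWY - b *\<^sub>R sWX) \<bullet> (sWY - b *\<^sub>R sWX) - 2 * b * sYX + b\<^sup>2 \<and>
          r < 1 - sWX \<bullet> sWX \<and> C)"
  by (auto simp: inner_diff_left inner_add_left algebra_simps power2_eq_square)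

theorem mainTheorem18:
  fixes vY sYX b :: real and sWX sWY rX rY c :: "real^'d"
  assumes pd: "joint_pd vY 1 sYX sWX sWY (mat 1)"
  shows "b \<in> Bset vY 1 sYX sWX sWY (mat 1) rX rY c \<longleftrightarrow>
    (\<exists>p1 g1 :: real^'d.
       (p1 \<bullet> rX) * (g1 \<bullet> rY) * (1 - (norm c)^2) = k1 sYX sWX sWY (mat 1) - b * k0 1 sWX (mat 1) \<and>
       (mat 1 + outer c rY) *v g1 = sWY - b *\<^sub>R sWX \<and>
       (mat 1 + outer c rX) *v p1 = sWX \<and>
       (g1 \<bullet> rY)^2 * (1 - (norm c)^2) <
          k0 1 sWX (mat 1) * (beta_med 1 sYX sWX sWY (mat 1) - b)^2
          + var_Y_perp_XW vY 1 sYX sWX sWY (mat 1) \<and>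
       (p1 \<bullet> rX)^2 * (1 - (norm c)^2) < k0 1 sWX (mat 1) \<and>
       (norm c)^2 < 1)"
proof -
  have k0_pos: "0 < 1 - sWX \<bullet> sWX" using pd by (rule joint_pd_imp_k0_pos)
  have square_forms: "x \<bullet> ((mat 1 + outer r r + 2 *\<^sub>R outer r c) *v x)
      = (x + (x \<bullet> r) *\<^sub>R c) \<bullet> (x + (x \<bullet> r) *\<^sub>R c) + (x \<bullet> r)\<^sup>2 * (1 - c \<bullet> c)" for x r :: "real^'d"
    using rank_one_square_form[of x r c] by (simp add: add_ac)
  show ?thesis
    unfolding Bset_def mem_Collect_eq rank_one_cross_form rank_one_square_form square_forms
      identity_plus_outer_mult_vector vector_mult_identity_plus_outer
      residual_variance_decomposition[OF k0_pos]
    unfolding k0_def k1_def matrix_inv_mat_1 matrix_vector_mul_lid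
      power2_norm_eq_inner mult_1_right
    by (intro iff_exI identified_set_conditions_iff)
qed

end
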